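(* Let $X$, $Y$ be FK-spaces containing $\phi$ and let $Z=X+Y$ with its inductive-limit FK-topology. Then $E(X)+E(Y)\subseteq E(Z)$ for each of $E=D_p^qS,\ D_p^qW,\ D_p^qF,\ D_p^qB$.
   Context: An FK-space is a vector subspace of the space $w$ of all complex sequences with a complete metrizable locally convex topology in which coordinate functionals are continuous; $X'$ is its continuous dual. If $X$, $Y$ have paranorms $\rho$, $s$, then $Z=X+Y$ is an FK-space with paranorm $\tau(z)=\inf\{\rho(x)+s(y): x\in X, y\in Y, x+y=z\}$. $\delta^j$ has $1$ in position $j$, $0$ elsewhere; $\phi=\operatorname{span}\{\delta^j\}$. $p(n)<q(n)$ are nonnegative integer sequences with $q(n)\to\infty$. For $x\in w$, $x^{(k)}=\sum_{j=1}^kx_j\delta^j$ and $T_n(x)=\frac{1}{q(n)-p(n)}\sum_{k=p(n)+1}^{q(n)}x^{(k)}$. For an FK-space $X\supseteq\phi$: $D_p^qS(X)=\{x\in X: T_n(x)\to x\text{ in }X\}$; $D_p^qW(X)=\{x\in X: f(T_n(x))\to f(x)\ \forall f\in X'\}$; $D_p^qF(X)=\{x\in X:\lim_n f(T_n(x))\text{ exists }\forall f\in X'\}$; $D_p^qB(X)=\{x\in X:\sup_n|f(T_n(x))|<\infty\ \forall f\in X'\}$. *)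

theory Defs
  imports "HOL-Analysis.Analysis" "HOL-Library.Function_Algebras"
begin

text \<open>Sequences in w are modelled as nat \<Rightarrow> complex; index 0 is the first coordinate.\<close>

type_synonym seq = "nat \<Rightarrow> complex"

definition smul :: "complex \<Rightarrow> seq \<Rightarrow> seq" where
  "smul c x = (\<lambda>j. c * x j)"

definition unitseq :: "nat \<Rightarrow> seq" where
  "unitseq j = (\<lambda>i. if i = j then 1 else 0)"

definition is_subspace :: "seq set \<Rightarrow> bool" where
  "is_subspace X \<longleftrightarrow> 0 \<in> X \<and> (\<forall>x\<in>X. \<forall>y\<in>X. x + y \<in> X) \<and> (\<forall>c. \<forall>x\<in>X. smul c x \<in> X)"

definition is_paranorm :: "seq set \<Rightarrow> (seq \<Rightarrow> real) \<Rightarrow> bool" where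
  "is_paranorm X \<rho> \<longleftrightarrow>
     \<rho> 0 = 0 \<and>
     (\<forall>x\<in>X. \<rho> x \<ge> 0) \<and>
     (\<forall>x\<in>X. \<rho> (- x) = \<rho> x) \<and>
     (\<forall>x\<in>X. \<forall>y\<in>X. \<rho> (x + y) \<le> \<rho> x + \<rho> y) \<and>
     (\<forall>t tt x xs. (\<forall>n. xs n \<in> X) \<longrightarrow> x \<in> X \<longrightarrow> tt \<longlonglongrightarrow> t \<longrightarrow>
         (\<lambda>n. \<rho> (xs n - x)) \<longlonglongrightarrow> 0 \<longrightarrow>
         (\<lambda>n. \<rho> (smul (tt n) (xs n) - smul t x)) \<longlonglongrightarrow> 0)"

definition pn_complete :: "seq set \<Rightarrow> (seq \<Rightarrow> real) \<Rightarrow> bool" where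
  "pn_complete X \<rho> \<longleftrightarrow>
     (\<forall>s. (\<forall>n. s n \<in> X) \<longrightarrow> (\<forall>e>0. \<exists>N. \<forall>m\<ge>N. \<forall>n\<ge>N. \<rho> (s m - s n) < e) \<longrightarrow>
          (\<exists>x\<in>X. (\<lambda>n. \<rho> (s n - x)) \<longlonglongrightarrow> 0))"

definition real_convex_set :: "seq set \<Rightarrow> bool" where
  "real_convex_set C \<longleftrightarrow>
     (\<forall>x\<in>C. \<forall>y\<in>C. \<forall>t::real. 0 \<le> t \<and> t \<le> 1 \<longrightarrow>
        (\<lambda>j. complex_of_real t * x j + complex_of_real (1 - t) * y j) \<in> C)"

definition pn_locally_convex :: "seq set \<Rightarrow> (seq \<Rightarrow> real) \<Rightarrow> bool" where
  "pn_locally_convex X \<rho> \<longleftrightarrow>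
     (\<forall>e>0. \<exists>C. C \<subseteq> {x\<in>X. \<rho> x < e} \<and> real_convex_set C \<and>
              (\<exists>d>0. {x\<in>X. \<rho> x < d} \<subseteq> C))"

definition pn_continuous :: "seq set \<Rightarrow> (seq \<Rightarrow> real) \<Rightarrow> (seq \<Rightarrow> complex) \<Rightarrow> bool" where
  "pn_continuous X \<rho> f \<longleftrightarrow>
     (\<forall>x\<in>X. \<forall>e>0. \<exists>d>0. \<forall>y\<in>X. \<rho> (y - x) < d \<longrightarrow> cmod (f y - f x) < e)"

definition FK_space :: "seq set \<Rightarrow> (seq \<Rightarrow> real) \<Rightarrow> bool" where
  "FK_space X \<rho> \<longleftrightarrow> is_subspace X \<and> is_paranorm X \<rho> \<and> pn_complete X \<rho> \<and>
     pn_locally_convex X \<rho> \<and> (\<forall>j. pn_continuous X \<rho> (\<lambda>x. x j))"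

definition contains_phi :: "seq set \<Rightarrow> bool" where
  "contains_phi X \<longleftrightarrow> (\<forall>j. unitseq j \<in> X)"

definition is_linear_on :: "seq set \<Rightarrow> (seq \<Rightarrow> complex) \<Rightarrow> bool" where
  "is_linear_on X f \<longleftrightarrow> (\<forall>x\<in>X. \<forall>y\<in>X. f (x + y) = f x + f y) \<and>
                        (\<forall>c. \<forall>x\<in>X. f (smul c x) = c * f x)"

definition cdual :: "seq set \<Rightarrow> (seq \<Rightarrow> real) \<Rightarrow> (seq \<Rightarrow> complex) set" where
  "cdual X \<rho> = {f. is_linear_on X f \<and> pn_continuous X \<rho> f}"

definition sum_space :: "seq set \<Rightarrow> seq set \<Rightarrow> seq set" where
  "sum_space X Y = {x + y | x y. x \<in> X \<and> y \<in> Y}"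

definition sum_paranorm :: "seq set \<Rightarrow> (seq \<Rightarrow> real) \<Rightarrow> seq set \<Rightarrow> (seq \<Rightarrow> real) \<Rightarrow> seq \<Rightarrow> real" where
  "sum_paranorm X \<rho> Y s z = Inf {\<rho> x + s y | x y. x \<in> X \<and> y \<in> Y \<and> x + y = z}"

text \<open>Sections x^(k) = sum_{j=1}^k x_j delta^j (0-based: coordinates 0..k-1).\<close>
definition sect :: "nat \<Rightarrow> seq \<Rightarrow> seq" where
  "sect k x = (\<lambda>j. if j < k then x j else 0)"

definition Tmean :: "(nat \<Rightarrow> nat) \<Rightarrow> (nat \<Rightarrow> nat) \<Rightarrow> nat \<Rightarrow> seq \<Rightarrow> seq" where
  "Tmean p q n x = (\<lambda>j. (\<Sum>k\<in>{p n<..q n}. sect k x j) / of_nat (q n - p n))"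

definition DS :: "(nat \<Rightarrow> nat) \<Rightarrow> (nat \<Rightarrow> nat) \<Rightarrow> seq set \<Rightarrow> (seq \<Rightarrow> real) \<Rightarrow> seq set" where
  "DS p q X \<rho> = {x\<in>X. (\<lambda>n. \<rho> (Tmean p q n x - x)) \<longlonglongrightarrow> 0}"

definition DW :: "(nat \<Rightarrow> nat) \<Rightarrow> (nat \<Rightarrow> nat) \<Rightarrow> seq set \<Rightarrow> (seq \<Rightarrow> real) \<Rightarrow> seq set" where
  "DW p q X \<rho> = {x\<in>X. \<forall>f\<in>cdual X \<rho>. (\<lambda>n. f (Tmean p q n x)) \<longlonglongrightarrow> f x}"

definition DF :: "(nat \<Rightarrow> nat) \<Rightarrow> (nat \<Rightarrow> nat) \<Rightarrow> seq set \<Rightarrow> (seq \<Rightarrow> real) \<Rightarrow> seq set" where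
  "DF p q X \<rho> = {x\<in>X. \<forall>f\<in>cdual X \<rho>. convergent (\<lambda>n. f (Tmean p q n x))}"

definition DB :: "(nat \<Rightarrow> nat) \<Rightarrow> (nat \<Rightarrow> nat) \<Rightarrow> seq set \<Rightarrow> (seq \<Rightarrow> real) \<Rightarrow> seq set" where
  "DB p q X \<rho> = {x\<in>X. \<forall>f\<in>cdual X \<rho>. \<exists>M. \<forall>n. cmod (f (Tmean p q n x)) \<le> M}"

end

theory Submission
  imports Defs
begin

text \<open>Every section x^(k) lies in \<phi>, hence in X, Y and Z, and T_n is additive. So
  T_n(x + y) - (x + y) splits as (T_n x - x) + (T_n y - y) with summands in X and Y, and its
  \<tau>-paranorm is at most \<rho>(T_n x - x) + s(T_n y - y); this settles D_p^q S. Since \<tau> \<le> \<rho> on X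
  and \<tau> \<le> s on Y, every f \<in> Z' restricts to elements of X' and Y', and
  f(T_n(x + y)) = f(T_n x) + f(T_n y) reduces the weak cases to sums of convergent or bounded
  sequences.\<close>

lemma is_subspace_add: "is_subspace X \<Longrightarrow> a \<in> X \<Longrightarrow> b \<in> X \<Longrightarrow> a + b \<in> X"
  unfolding is_subspace_def by blast

lemma is_subspace_smul: "is_subspace X \<Longrightarrow> a \<in> X \<Longrightarrow> smul c a \<in> X"
  unfolding is_subspace_def by blast

lemma is_subspace_diff: "is_subspace X \<Longrightarrow> a \<in> X \<Longrightarrow> b \<in> X \<Longrightarrow> a - b \<in> X"
proof -
  assume X: "is_subspace X" and "a \<in> X" "b \<in> X"
  have "a + smul (-1) b \<in> X" using X \<open>a \<in> X\<close> \<open>b \<in> X\<close> by (intro is_subspace_add is_subspace_smul)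
  moreover have "a + smul (-1) b = a - b" by (simp add: smul_def fun_eq_iff)
  ultimately show "a - b \<in> X" by simp
qed

lemma finite_support_mem_subspace:
  assumes X: "is_subspace X" "contains_phi X" and "finite S"
  shows "(\<lambda>j. if j \<in> S then c j else 0) \<in> X"
  using \<open>finite S\<close>
proof (induction S rule: finite_induct)
  case empty
  have "(\<lambda>j::nat. if j \<in> {} then c j else 0) = 0" by (simp add: fun_eq_iff)
  then show ?case using X unfolding is_subspace_def by simp
next
  case (insert a S)
  have "(\<lambda>j. if j \<in> insert a S then c j else 0) =
        (\<lambda>j. if j \<in> S then c j else 0) + smul (c a) (unitseq a)"
    using insert.hyps(2) by (auto simp: fun_eq_iff smul_def unitseq_def)
  moreover have "unitseq a \<in> X" using X unfolding contains_phi_def by blast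
  ultimately show ?case using insert.IH X by (simp add: is_subspace_add is_subspace_smul)
qed

lemma Tmean_mem:
  assumes "is_subspace X" "contains_phi X"
  shows "Tmean p q n x \<in> X"
proof -
  have "Tmean p q n x = (\<lambda>j. if j \<in> {..<q n} then Tmean p q n x j else 0)"
    by (auto simp: fun_eq_iff Tmean_def sect_def intro!: sum.neutral)
  also have "\<dots> \<in> X" using assms by (rule finite_support_mem_subspace) simp
  finally show ?thesis .
qed

lemma sect_add: "sect k (x + y) = sect k x + sect k y"
  by (simp add: fun_eq_iff sect_def)

lemma Tmean_add: "Tmean p q n (x + y) = Tmean p q n x + Tmean p q n y"
  by (simp add: fun_eq_iff Tmean_def sect_add sum.distrib add_divide_distrib)

lemma add_mem_sum_space: "x \<in> X \<Longrightarrow> y \<in> Y \<Longrightarrow> x + y \<in> sum_space X Y"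
  unfolding sum_space_def by blast

lemma subset_sum_space_left: "is_subspace Y \<Longrightarrow> X \<subseteq> sum_space X Y"
  using add_mem_sum_space[of _ X 0 Y] unfolding is_subspace_def by auto

lemma subset_sum_space_right: "is_subspace X \<Longrightarrow> Y \<subseteq> sum_space X Y"
  using add_mem_sum_space[of 0 X _ Y] unfolding is_subspace_def by auto

lemma sum_paranorm_le:
  assumes "is_paranorm X \<rho>" "is_paranorm Y s" "x \<in> X" "y \<in> Y"
  shows "sum_paranorm X \<rho> Y s (x + y) \<le> \<rho> x + s y"
  unfolding sum_paranorm_def
proof (rule cInf_lower)
  show "\<rho> x + s y \<in> {\<rho> x' + s y' |x' y'. x' \<in> X \<and> y' \<in> Y \<and> x' + y' = x + y}"
    using assms(3,4) by blast
  show "bdd_below {\<rho> x' + s y' |x' y'. x' \<in> X \<and> y' \<in> Y \<and> x' + y' = x + y}"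
    using assms(1,2) unfolding is_paranorm_def by (intro bdd_belowI[of _ 0]) force
qed

lemma sum_paranorm_nonneg:
  assumes "is_paranorm X \<rho>" "is_paranorm Y s" "x \<in> X" "y \<in> Y"
  shows "0 \<le> sum_paranorm X \<rho> Y s (x + y)"
  unfolding sum_paranorm_def
proof (rule cInf_greatest)
  show "{\<rho> x' + s y' |x' y'. x' \<in> X \<and> y' \<in> Y \<and> x' + y' = x + y} \<noteq> {}"
    using assms(3,4) by blast
qed (use assms(1,2) in \<open>force simp: is_paranorm_def\<close>)

lemma sum_paranorm_le_left:
  assumes "is_paranorm X \<rho>" "is_paranorm Y s" "is_subspace Y" "x \<in> X"
  shows "sum_paranorm X \<rho> Y s x \<le> \<rho> x"
  using sum_paranorm_le[OF assms(1,2) \<open>x \<in> X\<close>, of 0] assms(2,3)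
  unfolding is_paranorm_def is_subspace_def by simp

lemma sum_paranorm_le_right:
  assumes "is_paranorm X \<rho>" "is_paranorm Y s" "is_subspace X" "y \<in> Y"
  shows "sum_paranorm X \<rho> Y s y \<le> s y"
  using sum_paranorm_le[OF assms(1,2) _ \<open>y \<in> Y\<close>, of 0] assms(1,3)
  unfolding is_paranorm_def is_subspace_def by simp

lemma cdual_restrict:
  assumes X: "is_subspace X" and "X \<subseteq> Z" and dominated: "\<forall>x\<in>X. \<tau> x \<le> \<rho> x"
    and f: "f \<in> cdual Z \<tau>"
  shows "f \<in> cdual X \<rho>"
proof -
  have "is_linear_on X f"
    using f \<open>X \<subseteq> Z\<close> X unfolding cdual_def is_linear_on_def is_subspace_def by blast
  moreover have "pn_continuous X \<rho> f"
    unfolding pn_continuous_def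
  proof (intro ballI allI impI)
    fix x and e :: real assume "x \<in> X" "e > 0"
    then obtain d where "d > 0" and d: "\<forall>y\<in>Z. \<tau> (y - x) < d \<longrightarrow> cmod (f y - f x) < e"
      using f \<open>X \<subseteq> Z\<close> unfolding cdual_def pn_continuous_def by blast
    have "cmod (f y - f x) < e" if "y \<in> X" "\<rho> (y - x) < d" for y
      using d dominated is_subspace_diff[OF X \<open>y \<in> X\<close> \<open>x \<in> X\<close>] that \<open>X \<subseteq> Z\<close>
      by (meson in_mono order.strict_trans1)
    with \<open>d > 0\<close> show "\<exists>d>0. \<forall>y\<in>X. \<rho> (y - x) < d \<longrightarrow> cmod (f y - f x) < e" by blast
  qed
  ultimately show ?thesis unfolding cdual_def by simp
qed

locale phi_paranormed_pair =
  fixes X Y :: "seq set" and \<rho> s :: "seq \<Rightarrow> real"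
  assumes subspace_X: "is_subspace X" and subspace_Y: "is_subspace Y"
    and paranorm_X: "is_paranorm X \<rho>" and paranorm_Y: "is_paranorm Y s"
    and phi_X: "contains_phi X" and phi_Y: "contains_phi Y"
begin

abbreviation Z :: "seq set" where "Z \<equiv> sum_space X Y"

abbreviation \<tau> :: "seq \<Rightarrow> real" where "\<tau> \<equiv> sum_paranorm X \<rho> Y s"

lemma X_subset_Z: "X \<subseteq> Z"
  using subspace_Y by (rule subset_sum_space_left)

lemma Y_subset_Z: "Y \<subseteq> Z"
  using subspace_X by (rule subset_sum_space_right)

lemma cdual_sum_space_restrict:
  assumes "f \<in> cdual Z \<tau>"
  shows "f \<in> cdual X \<rho>" and "f \<in> cdual Y s"
proof -
  show "f \<in> cdual X \<rho>"
    using sum_paranorm_le_left[OF paranorm_X paranorm_Y subspace_Y]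
    by (intro cdual_restrict[OF subspace_X X_subset_Z _ assms]) blast
  show "f \<in> cdual Y s"
    using sum_paranorm_le_right[OF paranorm_X paranorm_Y subspace_X]
    by (intro cdual_restrict[OF subspace_Y Y_subset_Z _ assms]) blast
qed

lemma cdual_add:
  assumes "f \<in> cdual Z \<tau>" "x \<in> X" "y \<in> Y"
  shows "f (x + y) = f x + f y"
proof -
  have "x \<in> Z" "y \<in> Z" using assms(2,3) X_subset_Z Y_subset_Z by auto
  with assms(1) show ?thesis unfolding cdual_def is_linear_on_def by blast
qed

lemma cdual_Tmean_add:
  assumes "f \<in> cdual Z \<tau>"
  shows "f (Tmean p q n (x + y)) = f (Tmean p q n x) + f (Tmean p q n y)"
  unfolding Tmean_add
  using assms Tmean_mem[OF subspace_X phi_X] Tmean_mem[OF subspace_Y phi_Y] by (rule cdual_add)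

lemma DS_sum_space_subset: "sum_space (DS p q X \<rho>) (DS p q Y s) \<subseteq> DS p q Z \<tau>"
proof
  fix z assume "z \<in> sum_space (DS p q X \<rho>) (DS p q Y s)"
  then obtain x y where z: "z = x + y" and x: "x \<in> DS p q X \<rho>" and y: "y \<in> DS p q Y s"
    unfolding sum_space_def by blast
  have "x \<in> X" "y \<in> Y" using x y unfolding DS_def by auto
  define dx where "dx n = Tmean p q n x - x" for n
  define dy where "dy n = Tmean p q n y - y" for n
  have dx: "dx n \<in> X" and dy: "dy n \<in> Y" for n
    unfolding dx_def dy_def
    using is_subspace_diff[OF subspace_X Tmean_mem[OF subspace_X phi_X] \<open>x \<in> X\<close>]
      is_subspace_diff[OF subspace_Y Tmean_mem[OF subspace_Y phi_Y] \<open>y \<in> Y\<close>] by blast+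
  have split: "Tmean p q n z - z = dx n + dy n" for n
    by (simp add: z dx_def dy_def Tmean_add fun_eq_iff)
  have "(\<lambda>n. \<rho> (dx n)) \<longlonglongrightarrow> 0" "(\<lambda>n. s (dy n)) \<longlonglongrightarrow> 0"
    using x y unfolding DS_def dx_def dy_def by auto
  then have upper: "(\<lambda>n. \<rho> (dx n) + s (dy n)) \<longlonglongrightarrow> 0"
    by (rule tendsto_add_zero)
  have "\<forall>n. 0 \<le> \<tau> (dx n + dy n)"
    using sum_paranorm_nonneg[OF paranorm_X paranorm_Y dx dy] by blast
  moreover have "\<forall>n. \<tau> (dx n + dy n) \<le> \<rho> (dx n) + s (dy n)"
    using sum_paranorm_le[OF paranorm_X paranorm_Y dx dy] by blast
  ultimately have "(\<lambda>n. \<tau> (Tmean p q n z - z)) \<longlonglongrightarrow> 0"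
    unfolding split
    by (rule tendsto_sandwich[OF always_eventually always_eventually tendsto_const upper])
  moreover have "z \<in> Z" using add_mem_sum_space[OF \<open>x \<in> X\<close> \<open>y \<in> Y\<close>] z by simp
  ultimately show "z \<in> DS p q Z \<tau>" unfolding DS_def by blast
qed

lemma DW_sum_space_subset: "sum_space (DW p q X \<rho>) (DW p q Y s) \<subseteq> DW p q Z \<tau>"
proof
  fix z assume "z \<in> sum_space (DW p q X \<rho>) (DW p q Y s)"
  then obtain x y where z: "z = x + y" and x: "x \<in> DW p q X \<rho>" and y: "y \<in> DW p q Y s"
    unfolding sum_space_def by blast
  have "x \<in> X" "y \<in> Y" using x y unfolding DW_def by auto
  have "(\<lambda>n. f (Tmean p q n z)) \<longlonglongrightarrow> f z" if f: "f \<in> cdual Z \<tau>" for f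
  proof -
    have "(\<lambda>n. f (Tmean p q n x) + f (Tmean p q n y)) \<longlonglongrightarrow> f x + f y"
      using x y cdual_sum_space_restrict[OF f] unfolding DW_def by (intro tendsto_add) auto
    then show ?thesis
      using cdual_Tmean_add[OF f] cdual_add[OF f \<open>x \<in> X\<close> \<open>y \<in> Y\<close>] z by simp
  qed
  then show "z \<in> DW p q Z \<tau>"
    unfolding DW_def using add_mem_sum_space[OF \<open>x \<in> X\<close> \<open>y \<in> Y\<close>] z by simp
qed

lemma DF_sum_space_subset: "sum_space (DF p q X \<rho>) (DF p q Y s) \<subseteq> DF p q Z \<tau>"
proof
  fix z assume "z \<in> sum_space (DF p q X \<rho>) (DF p q Y s)"
  then obtain x y where z: "z = x + y" and x: "x \<in> DF p q X \<rho>" and y: "y \<in> DF p q Y s"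
    unfolding sum_space_def by blast
  have "x \<in> X" "y \<in> Y" using x y unfolding DF_def by auto
  have "convergent (\<lambda>n. f (Tmean p q n z))" if f: "f \<in> cdual Z \<tau>" for f
  proof -
    have "convergent (\<lambda>n. f (Tmean p q n x) + f (Tmean p q n y))"
      using x y cdual_sum_space_restrict[OF f] unfolding DF_def by (intro convergent_add) auto
    then show ?thesis using cdual_Tmean_add[OF f] z by simp
  qed
  then show "z \<in> DF p q Z \<tau>"
    unfolding DF_def using add_mem_sum_space[OF \<open>x \<in> X\<close> \<open>y \<in> Y\<close>] z by simp
qed

lemma DB_sum_space_subset: "sum_space (DB p q X \<rho>) (DB p q Y s) \<subseteq> DB p q Z \<tau>"
proof
  fix z assume "z \<in> sum_space (DB p q X \<rho>) (DB p q Y s)"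
  then obtain x y where z: "z = x + y" and x: "x \<in> DB p q X \<rho>" and y: "y \<in> DB p q Y s"
    unfolding sum_space_def by blast
  have "x \<in> X" "y \<in> Y" using x y unfolding DB_def by auto
  have "\<exists>M. \<forall>n. cmod (f (Tmean p q n z)) \<le> M" if f: "f \<in> cdual Z \<tau>" for f
  proof -
    obtain Mx My where Mx: "\<And>n. cmod (f (Tmean p q n x)) \<le> Mx"
      and My: "\<And>n. cmod (f (Tmean p q n y)) \<le> My"
      using x y cdual_sum_space_restrict[OF f] unfolding DB_def by blast
    have "cmod (f (Tmean p q n z)) \<le> Mx + My" for n
    proof -
      have "cmod (f (Tmean p q n z)) \<le> cmod (f (Tmean p q n x)) + cmod (f (Tmean p q n y))"
        using cdual_Tmean_add[OF f] z by (simp add: norm_triangle_ineq)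
      also have "\<dots> \<le> Mx + My" using Mx My by (rule add_mono)
      finally show ?thesis .
    qed
    then show ?thesis by blast
  qed
  then show "z \<in> DB p q Z \<tau>"
    unfolding DB_def using add_mem_sum_space[OF \<open>x \<in> X\<close> \<open>y \<in> Y\<close>] z by simp
qed

end

theorem mainTheorem17:
  fixes X Y :: "seq set" and \<rho> s :: "seq \<Rightarrow> real" and p q :: "nat \<Rightarrow> nat"
  assumes "FK_space X \<rho>" and "FK_space Y s"
    and "contains_phi X" and "contains_phi Y"
    and "\<forall>n. p n < q n" and "filterlim q at_top sequentially"
  defines "Z \<equiv> sum_space X Y" and "\<tau> \<equiv> sum_paranorm X \<rho> Y s"
  shows "sum_space (DS p q X \<rho>) (DS p q Y s) \<subseteq> DS p q Z \<tau> \<and>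
     sum_space (DW p q X \<rho>) (DW p q Y s) \<subseteq> DW p q Z \<tau> \<and>
     sum_space (DF p q X \<rho>) (DF p q Y s) \<subseteq> DF p q Z \<tau> \<and>
     sum_space (DB p q X \<rho>) (DB p q Y s) \<subseteq> DB p q Z \<tau>"
proof -
  interpret phi_paranormed_pair X Y \<rho> s
    using assms(1-4) by unfold_locales (simp_all add: FK_space_def)
  show ?thesis
    unfolding Z_def \<tau>_def
    by (intro conjI DS_sum_space_subset DW_sum_space_subset DF_sum_space_subset
        DB_sum_space_subset)
qed

end
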